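(* Let $n\ge 3$, let $a_0,\ldots,a_{n-1}$ be indeterminates over $\mathbb{Q}$ and $f=x^n+a_{n-1}x^{n-1}+\cdots+a_0$. For each integer $m$ put $\varphi_m(x)=f^{(m)}(x)/m!$ if $1\le m\le n$ and $\varphi_m=0$ if $m\le 0$ or $m>n$. Let $M$ be the infinite matrix with entries $M_{2s-1,l}=\varphi_{2(l-s)+2}$, $M_{2s,l}=\varphi_{2(l-s)+1}$ ($s,l\ge 1$), and let $H$ be its $(n-2)$th leading principal minor. Then $\deg(H,x)=(n-1)(n-2)/2$.
   Context: $f^{(m)}$ is the $m$th derivative of $f$ with respect to $x$; $\deg(H,x)$ is the degree of $H$ as a polynomial in $x$ with coefficients in $\mathbb{Q}[a_0,\ldots,a_{n-1}]$. *)

theory Defs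
  imports "HOL-Library.Poly_Mapping" "Jordan_Normal_Form.Determinant"
begin

text \<open>The coefficient ring Q[a_0,...,a_{n-1}] (indeed Q[a_0,a_1,...]) is rendered as
  multivariate polynomials over rat: finitely supported maps from monomials
  (finitely supported exponent vectors) to rat coefficients.\<close>

type_synonym mpoly_Q = "(nat \<Rightarrow>\<^sub>0 nat) \<Rightarrow>\<^sub>0 rat"

definition mvar :: "nat \<Rightarrow> mpoly_Q" where
  "mvar i = Poly_Mapping.single (Poly_Mapping.single i 1) 1"

definition mconst :: "rat \<Rightarrow> mpoly_Q" where
  "mconst c = Poly_Mapping.single 0 c"

definition gen_f :: "nat \<Rightarrow> mpoly_Q poly" where
  "gen_f n = monom 1 n + (\<Sum>i<n. monom (mvar i) i)"

definition phi :: "nat \<Rightarrow> int \<Rightarrow> mpoly_Q poly" where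
  "phi n m = (if 1 \<le> m \<and> m \<le> int n
     then smult (mconst (1 / of_nat (fact (nat m)))) ((pderiv ^^ nat m) (gen_f n))
     else 0)"

text \<open>Entries of the infinite matrix M (1-based indices r, l \<ge> 1):
  M_{2s-1,l} = phi_{2(l-s)+2}, M_{2s,l} = phi_{2(l-s)+1}.\<close>
definition M_entry :: "nat \<Rightarrow> nat \<Rightarrow> nat \<Rightarrow> mpoly_Q poly" where
  "M_entry n r l = (if odd r
     then phi n (2 * (int l - (int r + 1) div 2) + 2)
     else phi n (2 * (int l - int r div 2) + 1))"

definition H_minor :: "nat \<Rightarrow> nat \<Rightarrow> mpoly_Q poly" where
  "H_minor n k = det (mat k k (\<lambda>(i, j). M_entry n (i + 1) (j + 1)))"

end

theory Submission
  imports Defs "HOL-Computational_Algebra.Fundamental_Theorem_Algebra"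
    "HOL-Computational_Algebra.Field_as_Ring"
begin

text \<open>Give row i (counted from 0) the weight n - 2 + i and column j the weight 2j. The entry
  phi_(2j-i+2) has degree n - (2j-i+2), the difference of the two weights, so every term of the
  determinant has degree at most the sum of the row weights minus the sum of the column weights,
  which is (n-1)(n-2)/2, and the coefficient in that degree is the determinant of the matrix of
  leading coefficients binomial(n, 2j-i+2). That determinant is nonzero: a vector v in its left
  kernel yields a polynomial U = sum_i v_i x^(i+1) of degree at most n - 2 such that
  U((1+x)^n - 1) is even. Writing (1+x)^n - 1 = x h, this makes h(x) divide U(-x)h(-x); as
  h(x) and h(-x) have no common root (1+z and 1-z are not both n-th roots of unity unless z = 0),
  h divides U(-x), and deg h = n - 1 forces U = 0.\<close>

lemma coeff_mult_bound_sum: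
  fixes p q :: "'a::comm_semiring_1 poly"
  assumes "degree p \<le> m" "degree q \<le> k"
  shows "coeff (p * q) (m + k) = coeff p m * coeff q k"
proof (cases "degree p = m \<and> degree q = k")
  case True
  then show ?thesis using coeff_mult_degree_sum[of p q] by simp
next
  case False
  then have "degree p < m \<or> degree q < k" using assms by auto
  moreover have "degree (p * q) < m + k"
    using degree_mult_le[of p q] assms calculation by linarith
  ultimately show ?thesis by (auto simp: coeff_eq_0)
qed

lemma coeff_prod_bound_sum:
  fixes f :: "'b \<Rightarrow> 'a::comm_semiring_1 poly"
  assumes "\<And>i. i \<in> A \<Longrightarrow> degree (f i) \<le> d i"
  shows "coeff (\<Prod>i\<in>A. f i) (\<Sum>i\<in>A. d i) = (\<Prod>i\<in>A. coeff (f i) (d i))"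
  using assms
proof (induction A rule: infinite_finite_induct)
  case (insert x A)
  have "degree (\<Prod>i\<in>A. f i) \<le> (\<Sum>i\<in>A. d i)"
    using degree_prod_sum_le[OF \<open>finite A\<close>, of f] sum_mono[of A "degree \<circ> f" d] insert.prems
    by fastforce
  with insert show ?case by (simp add: coeff_mult_bound_sum)
qed simp_all

lemma det_mat_permutation_expansion:
  "det (mat k k f) = (\<Sum>p\<in>{p. p permutes {0..<k}}. signof p * (\<Prod>i=0..<k. f (i, p i)))"
proof -
  have "p permutes {0..<k} \<Longrightarrow> i < k \<Longrightarrow> p i < k" for p i
    using permutes_in_image[of p "{0..<k}" i] by simp
  then show ?thesis
    by (subst det_def'[of _ k]) (auto intro!: sum.cong prod.cong)
qed

lemma signof_mult_poly: "(signof p :: 'a::comm_ring_1 poly) * q = smult (signof p) q"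
  by (simp add: sign_def)

lemma sum_diff_permutation:
  fixes r s :: "nat \<Rightarrow> nat"
  assumes p: "p permutes {0..<k}" and le: "\<And>i. i < k \<Longrightarrow> s (p i) \<le> r i"
  shows "(\<Sum>i=0..<k. r i - s (p i)) = (\<Sum>i=0..<k. r i) - (\<Sum>i=0..<k. s i)"
proof -
  have "(\<Sum>i=0..<k. r i - s (p i)) + (\<Sum>i=0..<k. s (p i)) = (\<Sum>i=0..<k. r i)"
    using le by (simp add: sum.distrib[symmetric])
  moreover have "(\<Sum>i=0..<k. s (p i)) = (\<Sum>i=0..<k. s i)"
    using sum.permute[OF p, of s] by (simp add: comp_def)
  ultimately show ?thesis by linarith
qed

context
  fixes k :: nat and r s :: "nat \<Rightarrow> nat" and F :: "nat \<Rightarrow> nat \<Rightarrow> 'a::comm_ring_1 poly"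
  assumes weight: "\<And>i j. i < k \<Longrightarrow> j < k \<Longrightarrow> F i j \<noteq> 0 \<Longrightarrow>
    s j \<le> r i \<and> degree (F i j) \<le> r i - s j"
begin

lemma prod_permutation_weighted:
  assumes p: "p permutes {0..<k}"
  shows "degree (\<Prod>i=0..<k. F i (p i)) \<le> (\<Sum>i=0..<k. r i) - (\<Sum>i=0..<k. s i) \<and>
    coeff (\<Prod>i=0..<k. F i (p i)) ((\<Sum>i=0..<k. r i) - (\<Sum>i=0..<k. s i)) =
      (\<Prod>i=0..<k. coeff (F i (p i)) (r i - s (p i)))"
proof (cases "\<exists>i<k. F i (p i) = 0")
  case True
  then obtain i where "i < k" "F i (p i) = 0" by blast
  then have "(\<Prod>i=0..<k. F i (p i)) = 0" "(\<Prod>i=0..<k. coeff (F i (p i)) (r i - s (p i))) = 0"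
    by (auto intro!: prod_zero bexI[of _ i])
  then show ?thesis by simp
next
  case False
  then have w: "s (p i) \<le> r i \<and> degree (F i (p i)) \<le> r i - s (p i)" if "i < k" for i
    using weight[of i "p i"] permutes_in_image[OF p, of i] that by auto
  have "degree (\<Prod>i=0..<k. F i (p i)) \<le> (\<Sum>i=0..<k. r i - s (p i))"
    using degree_prod_sum_le[of "{0..<k}" "\<lambda>i. F i (p i)"] w
      sum_mono[of "{0..<k}" "\<lambda>i. degree (F i (p i))" "\<lambda>i. r i - s (p i)"]
    by (simp add: o_def)
  moreover have "coeff (\<Prod>i=0..<k. F i (p i)) (\<Sum>i=0..<k. r i - s (p i)) =
      (\<Prod>i=0..<k. coeff (F i (p i)) (r i - s (p i)))"
    using w by (intro coeff_prod_bound_sum) simp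
  ultimately show ?thesis
    using sum_diff_permutation[OF p, of s r] w by simp
qed

lemma degree_det_weighted_le:
  "degree (det (mat k k (\<lambda>(i, j). F i j))) \<le> (\<Sum>i=0..<k. r i) - (\<Sum>i=0..<k. s i)"
  unfolding det_mat_permutation_expansion signof_mult_poly
  using prod_permutation_weighted
  by (intro degree_sum_le) (auto simp: finite_permutations intro: order.trans[OF degree_smult_le])

lemma coeff_det_weighted:
  "coeff (det (mat k k (\<lambda>(i, j). F i j))) ((\<Sum>i=0..<k. r i) - (\<Sum>i=0..<k. s i)) =
    det (mat k k (\<lambda>(i, j). coeff (F i j) (r i - s j)))"
  unfolding det_mat_permutation_expansion signof_mult_poly coeff_sum coeff_smult
  using prod_permutation_weighted by (auto intro!: sum.cong)

end

lemma degree_higher_pderiv_le: "degree ((pderiv ^^ t) p) \<le> degree p - t"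
  by (rule degree_le) (auto simp: coeff_higher_pderiv coeff_eq_0)

lemma of_nat_pochhammer_eq_binomial:
  assumes "t \<le> n"
  shows "of_nat (pochhammer (Suc (n - t)) t) / fact t = (of_nat (n choose t) :: 'a::field_char_0)"
proof -
  have "of_nat n - of_nat t + 1 = (of_nat (Suc (n - t)) :: 'a)"
    using assms by (simp add: of_nat_diff)
  then show ?thesis
    by (simp only: binomial_gbinomial gbinomial_pochhammer' pochhammer_of_nat)
qed

interpretation mconst: inj_comm_ring_hom mconst
proof
  show "mconst x = 0 \<Longrightarrow> x = 0" for x
    by (metis mconst_def lookup_single_eq lookup_zero)
qed (simp_all add: mconst_def single_add mult_single)

lemma degree_gen_f_le: "degree (gen_f n) \<le> n"
  unfolding gen_f_def
  by (intro degree_add_le degree_sum_le order.trans[OF degree_monom_le]) auto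

lemma coeff_gen_f_top: "coeff (gen_f n) n = 1"
  by (simp add: gen_f_def coeff_sum coeff_monom)

lemma phi_eq_0: "\<not> (1 \<le> m \<and> m \<le> int n) \<Longrightarrow> phi n m = 0"
  unfolding phi_def by auto

lemma degree_phi_le: "degree (phi n m) \<le> n - nat m"
proof (cases "1 \<le> m \<and> m \<le> int n")
  case True
  have "degree ((pderiv ^^ nat m) (gen_f n)) \<le> n - nat m"
    using degree_higher_pderiv_le[of "nat m" "gen_f n"] degree_gen_f_le[of n] by linarith
  then show ?thesis
    using True by (simp add: phi_def)
qed (simp add: phi_eq_0)

lemma coeff_phi:
  assumes "1 \<le> m" "m \<le> int n"
  shows "coeff (phi n m) (n - nat m) = mconst (of_nat (n choose nat m))"
proof -
  have "nat m \<le> n" using assms by linarith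
  then have "coeff (phi n m) (n - nat m) =
      mconst (1 / fact (nat m)) * pochhammer (of_nat (Suc (n - nat m))) (nat m)"
    using assms by (simp add: phi_def coeff_higher_pderiv coeff_gen_f_top)
  also have "\<dots> = mconst (of_nat (pochhammer (Suc (n - nat m)) (nat m)) / fact (nat m))"
    unfolding pochhammer_of_nat divide_inverse mconst.hom_mult mconst.hom_of_nat
    by (simp add: mult.commute)
  finally show ?thesis
    using \<open>nat m \<le> n\<close> by (simp add: of_nat_pochhammer_eq_binomial)
qed

lemma coeff_phi_band:
  assumes "2 \<le> n"
  shows "coeff (phi n (2 * int j - int i + 2)) (n - 2 + i - 2 * j) =
    mconst (if i \<le> 2 * j + 1 then of_nat (n choose (2 * j + 2 - i)) else 0)"
proof (cases "i \<le> 2 * j + 1")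
  case True
  define m where "m = 2 * int j - int i + 2"
  have m: "1 \<le> m" "nat m = 2 * j + 2 - i" using True by (simp_all add: m_def nat_diff_distrib)
  show ?thesis
  proof (cases "m \<le> int n")
    case True
    then have "n - 2 + i - 2 * j = n - nat m" using m assms by linarith
    then show ?thesis using coeff_phi[OF m(1) True] m \<open>i \<le> 2 * j + 1\<close> by (simp add: m_def)
  next
    case False
    then have "phi n m = 0" "n choose nat m = 0" using m by (simp_all add: phi_eq_0 binomial_eq_0)
    then show ?thesis using \<open>i \<le> 2 * j + 1\<close> m by (simp add: m_def)
  qed
qed (simp add: phi_eq_0)

lemma degree_phi_band_le:
  assumes "2 \<le> n" "phi n (2 * int j - int i + 2) \<noteq> 0"
  shows "2 * j \<le> n - 2 + i \<and> degree (phi n (2 * int j - int i + 2)) \<le> n - 2 + i - 2 * j"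
proof -
  have "1 \<le> 2 * int j - int i + 2 \<and> 2 * int j - int i + 2 \<le> int n"
    using assms(2) phi_eq_0 by blast
  then show ?thesis
    using degree_phi_le[of n "2 * int j - int i + 2"] assms(1) by auto
qed

lemma H_minor_eq_det: "H_minor n k = det (mat k k (\<lambda>(i, j). phi n (2 * int j - int i + 2)))"
proof -
  have entry: "M_entry n (i + 1) (j + 1) = phi n (2 * int j - int i + 2)" for i j
    by (cases "even i") (auto simp: M_entry_def elim!: evenE oddE)
  show ?thesis unfolding H_minor_def entry ..
qed

text \<open>The matrix of leading coefficients of the entries of H: phi_m has leading coefficient
  binomial(n, m) in degree n - m, and phi_m = 0 for m \<le> 0.\<close>

definition binomial_band_mat :: "nat \<Rightarrow> nat \<Rightarrow> 'a::semiring_1 mat" where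
  "binomial_band_mat n k =
     mat k k (\<lambda>(i, j). if i \<le> 2 * j + 1 then of_nat (n choose (2 * j + 2 - i)) else 0)"

lemma (in semiring_hom) map_binomial_band_mat:
  "map_mat hom (binomial_band_mat n k) = binomial_band_mat n k"
  by (rule eq_matI) (auto simp: binomial_band_mat_def hom_of_nat)

lemma coeff_phi_band_mat:
  assumes "2 \<le> n"
  shows "mat k k (\<lambda>(i, j). coeff (phi n (2 * int j - int i + 2)) (n - 2 + i - 2 * j)) =
    map_mat mconst (binomial_band_mat n k)"
  by (rule eq_matI) (simp_all add: binomial_band_mat_def coeff_phi_band[OF assms])

lemma coeff_binomial_minus_one:
  "coeff ([:1, 1:] ^ n - 1 :: 'a::comm_ring_1 poly) m = (if m = 0 then 0 else of_nat (n choose m))"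
proof (cases "m \<le> n")
  case True
  then show ?thesis by (simp add: coeff_linear_poly_power coeff_1)
next
  case False
  then have "coeff ([:1, 1:] ^ n :: 'a poly) m = 0"
    by (intro coeff_eq_0) (simp add: degree_linear_power)
  with False show ?thesis by (simp add: coeff_1 binomial_eq_0)
qed

lemma degree_binomial_minus_one_le: "degree ([:1, 1:] ^ n - 1 :: 'a::comm_ring_1 poly) \<le> n"
  by (intro degree_diff_le) (simp_all add: degree_linear_power)

lemma binomial_minus_one_factor:
  assumes "0 < n"
  obtains h :: "'a::idom poly"
  where "[:1, 1:] ^ n - 1 = [:0, 1:] * h" "poly h 0 = of_nat n" "degree h = n - 1"
proof -
  define g :: "'a poly" where "g = [:1, 1:] ^ n - 1"
  have "poly g 0 = 0" by (simp add: g_def)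
  then have "[:0, 1:] dvd g" using poly_eq_0_iff_dvd[of g 0] by simp
  then obtain h where g: "g = [:0, 1:] * h" by (rule dvdE)
  have "poly h 0 = coeff g 1"
    by (simp add: g poly_0_coeff_0 coeff_pCons)
  also have "\<dots> = of_nat n"
    unfolding g_def coeff_binomial_minus_one by simp
  finally have "poly h 0 = of_nat n" .
  moreover have "coeff g n \<noteq> 0"
    using assms unfolding g_def coeff_binomial_minus_one by simp
  then have "degree g = n"
    using degree_binomial_minus_one_le[of n] le_degree unfolding g_def by (metis antisym)
  then have "degree h = n - 1"
    using assms by (cases "h = 0") (auto simp: g degree_mult_eq)
  ultimately show thesis using that g unfolding g_def by blast
qed

lemma eq_0_if_plus_minus_roots_of_unity:
  fixes z :: complex
  assumes "0 < n" "(1 + z) ^ n = 1" "(1 - z) ^ n = 1"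
  shows "z = 0"
proof -
  have "cmod (1 + z) ^ n = 1" "cmod (1 - z) ^ n = 1"
    using assms(2,3) by (metis norm_one norm_power)+
  then have "cmod (1 + z) = 1" "cmod (1 - z) = 1"
    using power_eq_iff_eq_base[OF \<open>0 < n\<close>, of "cmod (1 + z)" 1]
      power_eq_iff_eq_base[OF \<open>0 < n\<close>, of "cmod (1 - z)" 1] by simp_all
  then have plus: "(1 + Re z)\<^sup>2 + (Im z)\<^sup>2 = 1" and minus: "(1 - Re z)\<^sup>2 + (Im z)\<^sup>2 = 1"
    by (simp_all add: cmod_def)
  have "(1 + Re z)\<^sup>2 - (1 - Re z)\<^sup>2 = 4 * Re z"
    by (simp add: power2_eq_square algebra_simps)
  then have "Re z = 0" using plus minus by linarith
  moreover from this have "Im z = 0" using plus by simp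
  ultimately show ?thesis by (simp add: complex_eq_iff)
qed

lemma coprime_if_no_common_root:
  fixes p q :: "complex poly"
  assumes "\<And>z. poly p z = 0 \<Longrightarrow> poly q z \<noteq> 0"
  shows "coprime p q"
proof -
  have no_root: "poly (gcd p q) z \<noteq> 0" for z
  proof
    assume "poly (gcd p q) z = 0"
    then have "[:- z, 1:] dvd gcd p q" by (simp add: poly_eq_0_iff_dvd)
    then have "[:- z, 1:] dvd p" "[:- z, 1:] dvd q"
      using dvd_trans[OF _ gcd_dvd1] dvd_trans[OF _ gcd_dvd2] by blast+
    then show False using assms[of z] by (simp add: poly_eq_0_iff_dvd)
  qed
  have "degree (gcd p q) = 0"
  proof (rule ccontr)
    assume "degree (gcd p q) \<noteq> 0"
    then have "\<not> constant (poly (gcd p q))" by (simp add: constant_degree)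
    then obtain z where "poly (gcd p q) z = 0" using fundamental_theorem_of_algebra by blast
    with no_root show False by blast
  qed
  moreover have "gcd p q \<noteq> 0" using no_root by auto
  ultimately have "is_unit (gcd p q)" using is_unit_iff_degree by blast
  then show ?thesis using is_unit_gcd by blast
qed

lemma pcompose_uminus_x_eq_if_odd_coeff_0:
  fixes p :: "'a::comm_ring_1 poly"
  assumes "\<And>k. odd k \<Longrightarrow> coeff p k = 0"
  shows "p \<circ>\<^sub>p [:0, -1:] = p"
proof (rule poly_eqI)
  show "coeff (p \<circ>\<^sub>p [:0, -1:]) k = coeff p k" for k
    by (cases "even k") (simp_all add: coeff_pcompose_linear assms)
qed

lemma eq_0_if_even_multiple_of_binomial_minus_one:
  fixes U :: "complex poly"
  assumes deg: "degree U < n - 1"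
    and even: "(U * ([:1, 1:] ^ n - 1)) \<circ>\<^sub>p [:0, -1:] = U * ([:1, 1:] ^ n - 1)"
  shows "U = 0"
proof -
  let ?R = "\<lambda>p. p \<circ>\<^sub>p [:0, -1:]"
  have "0 < n" using deg by simp
  then obtain h :: "complex poly"
    where g: "[:1, 1:] ^ n - 1 = [:0, 1:] * h" and h0: "poly h 0 = of_nat n"
      and degh: "degree h = n - 1"
    by (rule binomial_minus_one_factor)
  have "[:0, 1:] * (U * h) = [:0, 1:] * - (?R U * ?R h)"
    using even by (simp add: g pcompose_mult pcompose_pCons algebra_simps)
  then have Uh: "U * h = - (?R U * ?R h)" by simp
  have "coprime h (?R h)"
  proof (rule coprime_if_no_common_root)
    fix z assume hz: "poly h z = 0"
    show "poly (?R h) z \<noteq> 0"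
    proof
      assume "poly (?R h) z = 0"
      then have "poly h (- z) = 0" by (simp add: poly_pcompose)
      then have "(1 + z) ^ n = 1" "(1 - z) ^ n = 1"
        using hz arg_cong[OF g, of "\<lambda>p. poly p z"] arg_cong[OF g, of "\<lambda>p. poly p (- z)"] by simp_all
      then have "z = 0" by (intro eq_0_if_plus_minus_roots_of_unity[OF \<open>0 < n\<close>])
      then show False using hz h0 \<open>0 < n\<close> by simp
    qed
  qed
  moreover have "h dvd ?R U * ?R h"
    using Uh by (metis dvd_minus_iff dvd_triv_right mult.commute)
  ultimately have "h dvd ?R U" by (simp add: coprime_dvd_mult_left_iff)
  moreover have "degree (?R U) < degree h"
    using deg degh by (simp add: degree_pcompose)
  ultimately have "?R U = 0" using dvd_imp_degree_le leD by blast
  then show "U = 0" by (rule pcompose_eq_0) simp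
qed

lemma coeff_left_kernel_poly_odd_eq_0:
  fixes v :: "'a::comm_ring_1 vec"
  assumes "2 \<le> n" and v: "v \<in> carrier_vec (n - 2)"
    and kernel: "transpose_mat (binomial_band_mat n (n - 2)) *\<^sub>v v = 0\<^sub>v (n - 2)"
    and "odd m"
  shows "coeff ((\<Sum>i<n - 2. monom (v $ i) (Suc i)) * ([:1, 1:] ^ n - 1)) m = 0"
proof -
  define K where "K = n - 2"
  define B :: "'a mat" where "B = binomial_band_mat n K"
  define g :: "'a poly" where "g = [:1, 1:] ^ n - 1"
  define U where "U = (\<Sum>i<K. monom (v $ i) (Suc i))"
  have coeff_Ug: "coeff (U * g) m = (\<Sum>i<K. if m < Suc i then 0 else v $ i * coeff g (m - Suc i))" for m
    unfolding U_def sum_distrib_right coeff_sum coeff_monom_mult ..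
  have coeff_g: "coeff g m = (if m = 0 then 0 else of_nat (n choose m))" for m
    unfolding g_def by (rule coeff_binomial_minus_one)
  have entry: "(if 2 * j + 3 < Suc i then 0 else v $ i * coeff g (2 * j + 3 - Suc i)) =
      B $$ (i, j) * v $ i" if "i < K" "j < K" for i j
  proof -
    consider "i \<le> 2 * j + 1" | "i = 2 * j + 2" | "2 * j + 2 < i" by linarith
    then show ?thesis
      by cases (use that in \<open>auto simp: B_def binomial_band_mat_def coeff_g Suc_diff_le\<close>)
  qed
  have column: "coeff (U * g) (2 * j + 3) = (transpose_mat B *\<^sub>v v) $ j" if "j < K" for j
  proof -
    have "coeff (U * g) (2 * j + 3) = (\<Sum>i<K. B $$ (i, j) * v $ i)"
      unfolding coeff_Ug by (rule sum.cong[OF refl], rule entry) (use that in auto)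
    also have "\<dots> = (transpose_mat B *\<^sub>v v) $ j"
      using that v by (simp add: B_def K_def binomial_band_mat_def scalar_prod_def
        atLeast0LessThan mult.commute)
    finally show ?thesis .
  qed
  obtain j where m: "m = 2 * j + 1" using \<open>odd m\<close> oddE by blast
  consider "j = 0" | j' where "j = Suc j'" "j' < K" | j' where "j = Suc j'" "K \<le> j'"
    by (metis not0_implies_Suc not_le)
  then have "coeff (U * g) m = 0"
  proof cases
    case 1
    then show ?thesis unfolding m coeff_Ug by (intro sum.neutral) (auto simp: coeff_g)
  next
    case (2 j')
    then have "m = 2 * j' + 3" using m by simp
    then show ?thesis using column[of j'] kernel \<open>j' < K\<close> by (simp add: B_def K_def)
  next
    case 3
    have "degree U \<le> K"
      unfolding U_def by (intro degree_sum_le order.trans[OF degree_monom_le]) auto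
    moreover have "degree g \<le> n" unfolding g_def by (rule degree_binomial_minus_one_le)
    ultimately have "degree (U * g) \<le> K + n"
      using degree_mult_le[of U g] by linarith
    then show ?thesis using 3 \<open>2 \<le> n\<close> by (intro coeff_eq_0) (simp add: m K_def)
  qed
  then show ?thesis by (simp add: U_def g_def K_def)
qed

lemma det_binomial_band_mat_neq_0:
  assumes "2 \<le> n"
  shows "det (binomial_band_mat n (n - 2) :: complex mat) \<noteq> 0"
proof
  define K where "K = n - 2"
  define B :: "complex mat" where "B = binomial_band_mat n K"
  have B: "B \<in> carrier_mat K K" by (simp add: B_def binomial_band_mat_def)
  assume "det (binomial_band_mat n (n - 2) :: complex mat) = 0"
  then have "det (transpose_mat B) = 0" using B by (simp add: B_def K_def det_transpose)
  then obtain v where v: "v \<in> carrier_vec K" "v \<noteq> 0\<^sub>v K" "transpose_mat B *\<^sub>v v = 0\<^sub>v K"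
    using det_0_iff_vec_prod_zero_field[of "transpose_mat B" K] B by auto
  define U where "U = (\<Sum>i<K. monom (v $ i) (Suc i))"
  have "degree U \<le> K"
    unfolding U_def by (intro degree_sum_le order.trans[OF degree_monom_le]) auto
  moreover have "coeff (U * ([:1, 1:] ^ n - 1)) m = 0" if "odd m" for m
    using coeff_left_kernel_poly_odd_eq_0[OF assms _ _ that] v by (simp add: U_def B_def K_def)
  ultimately have "U = 0"
    using assms by (intro eq_0_if_even_multiple_of_binomial_minus_one[of U n])
      (simp_all add: K_def pcompose_uminus_x_eq_if_odd_coeff_0)
  have "v = 0\<^sub>v K"
  proof (rule eq_vecI)
    fix i assume "i < dim_vec (0\<^sub>v K)"
    then have "coeff U (Suc i) = v $ i" by (simp add: U_def coeff_sum coeff_monom)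
    then show "v $ i = 0\<^sub>v K $ i" using \<open>U = 0\<close> \<open>i < dim_vec (0\<^sub>v K)\<close> by simp
  qed (use v(1) in simp)
  then show False using v(2) by simp
qed

lemma sum_add_diff_sum_double:
  "(\<Sum>i=0..<k. k + i) - (\<Sum>i=0..<k. 2 * i) = Suc k * k div 2"
proof -
  have gauss: "2 * (\<Sum>i=0..<k. i) + k = k * k"
    by (induction k) (simp_all add: algebra_simps)
  have "(\<Sum>i=0..<k. k + i) - (\<Sum>i=0..<k. 2 * i) = k * k - (\<Sum>i=0..<k. i)"
    by (simp add: sum.distrib flip: sum_distrib_left)
  also have "\<dots> = Suc k * k div 2"
    using gauss by simp
  finally show ?thesis .
qed

theorem theorem5:
  fixes n :: nat
  assumes "n \<ge> 3"
  shows "Polynomial.degree (H_minor n (n - 2)) = (n - 1) * (n - 2) div 2"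
proof -
  have "2 \<le> n" "n - 1 = Suc (n - 2)" using assms by simp_all
  have weight: "2 * j \<le> n - 2 + i \<and>
      degree (phi n (2 * int j - int i + 2)) \<le> n - 2 + i - 2 * j"
    if "i < n - 2" "j < n - 2" "phi n (2 * int j - int i + 2) \<noteq> 0" for i j
    using degree_phi_band_le[OF \<open>2 \<le> n\<close> that(3)] .
  have D: "(\<Sum>i=0..<n - 2. n - 2 + i) - (\<Sum>i=0..<n - 2. 2 * i) = (n - 1) * (n - 2) div 2"
    unfolding \<open>n - 1 = Suc (n - 2)\<close> by (rule sum_add_diff_sum_double)
  have "of_rat (det (binomial_band_mat n (n - 2) :: rat mat)) =
      (det (binomial_band_mat n (n - 2)) :: complex)"
    by (metis of_rat_hom.hom_det of_rat_hom.map_binomial_band_mat)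
  then have "det (binomial_band_mat n (n - 2) :: rat mat) \<noteq> 0"
    using det_binomial_band_mat_neq_0[OF \<open>2 \<le> n\<close>] by auto
  then have "coeff (H_minor n (n - 2)) ((n - 1) * (n - 2) div 2) \<noteq> 0"
    using coeff_det_weighted[where k = "n - 2" and r = "\<lambda>i. n - 2 + i" and s = "\<lambda>j. 2 * j",
        OF weight]
    unfolding H_minor_eq_det D coeff_phi_band_mat[OF \<open>2 \<le> n\<close>] by simp
  moreover have "degree (H_minor n (n - 2)) \<le> (n - 1) * (n - 2) div 2"
    using degree_det_weighted_le[where k = "n - 2" and r = "\<lambda>i. n - 2 + i" and s = "\<lambda>j. 2 * j",
        OF weight]
    unfolding H_minor_eq_det D .
  ultimately show ?thesis by (simp add: le_antisym le_degree)
qed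

end
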